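(* Let $1\le k<d$, $0\le\ell<d$ and $t\ge0$ be integers. If $\ell\ge\min\{k,t\}$, then $\mathrm{Pol}^\ell_t(\mathcal{G}_{k,d})=\mathrm{Pol}_t(\mathcal{G}_{k,d})$.
   Context: $\mathscr{H}_d$ denotes the real symmetric $d\times d$ matrices with $\langle A,B\rangle=\operatorname{trace}(AB)$. $\mathcal{G}_{k,d}=\{P\in\mathscr{H}_d:P^2=P,\ \operatorname{trace}(P)=k\}$. $\mathrm{Pol}^\ell_t(\mathcal{G}_{k,d})$ is the linear span of the functions $P\mapsto\langle M,P\rangle^s$ on $\mathcal{G}_{k,d}$, with $M\in\mathscr{H}_d$ of rank at most $\ell$ and $0\le s\le t$. $\mathrm{Pol}_t(\mathcal{G}_{k,d})$ is the space of restrictions to $\mathcal{G}_{k,d}$ of polynomials of degree at most $t$ on $\mathscr{H}_d$ (in the matrix entries). *)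

theory Defs
  imports "HOL-Analysis.Analysis"
begin

text \<open>Real symmetric d x d matrices, with d = CARD('n).\<close>
definition sym_mat :: "real^'n^'n \<Rightarrow> bool" where
  "sym_mat A \<longleftrightarrow> transpose A = A"

definition mat_inner :: "real^'n^'n \<Rightarrow> real^'n^'n \<Rightarrow> real" where
  "mat_inner A B = trace (A ** B)"

text \<open>The Grassmannian G_{k,d} of rank-k orthogonal projections.\<close>
definition grass :: "nat \<Rightarrow> (real^'n^'n) set" where
  "grass k = {P. sym_mat P \<and> P ** P = P \<and> trace P = real k}"

text \<open>Functions are identified when they agree on G_{k,d}.\<close>
definition PolRank :: "nat \<Rightarrow> nat \<Rightarrow> nat \<Rightarrow> (real^'n^'n \<Rightarrow> real) set" where
  "PolRank l t k = {f. \<exists>(n::nat) (c::nat \<Rightarrow> real) (M::nat \<Rightarrow> real^'n^'n) (s::nat \<Rightarrow> nat).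
      (\<forall>i<n. sym_mat (M i) \<and> rank (M i) \<le> l \<and> s i \<le> t) \<and>
      (\<forall>P\<in>grass k. f P = (\<Sum>i<n. c i * (mat_inner (M i) P) ^ s i))}"

definition PolDeg :: "nat \<Rightarrow> nat \<Rightarrow> (real^'n^'n \<Rightarrow> real) set" where
  "PolDeg t k = {f. \<exists>(n::nat) (c::nat \<Rightarrow> real) (m::nat \<Rightarrow> nat) (a::nat \<Rightarrow> nat \<Rightarrow> 'n) (b::nat \<Rightarrow> nat \<Rightarrow> 'n).
      (\<forall>i<n. m i \<le> t) \<and>
      (\<forall>P\<in>grass k. f P = (\<Sum>i<n. c i * (\<Prod>j<m i. P $ a i j $ b i j)))}"

end

theory Submission
  imports Defs
begin

text \<open>Both spaces are spans of functions on \<open>G(k,d)\<close>, and \<open>\<langle>M,P\<rangle>^s\<close> expands into monomials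
of degree \<open>s\<close>, so only the monomials need work.
If \<open>t \<le> l\<close>: for symmetric \<open>P\<close>, every entry \<open>P_ab\<close> is a difference of two rank-one forms
\<open>\<langle>u u^T, P\<rangle>\<close>, and the polarization identity
\<open>m! y_1 \<cdots> y_m = \<Sum>_S (-1)^(m - |S|) (\<Sum>_{j \<in> S} y_j)^m\<close> turns a product of \<open>m \<le> l\<close> such
forms into \<open>m\<close>-th powers of forms of rank at most \<open>m\<close>.
If \<open>k \<le> l\<close>: pad the monomial with factors \<open>trace P / k = 1\<close> to degree exactly \<open>t\<close>, so that
it reads \<open>\<langle>W, P^\<otimes>t\<rangle>\<close> for some tensor \<open>W\<close>. Replacing \<open>W\<close> by its orthogonal projection onto
the span of the \<open>A^\<otimes>t\<close> with \<open>A \<in> G(k,d)\<close> does not change these values, and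
\<open>\<langle>A^\<otimes>t, P^\<otimes>t\<rangle> = \<langle>A,P\<rangle>^t\<close> with \<open>rank A = k \<le> l\<close>.\<close>

definition span_on :: "'a set \<Rightarrow> ('a \<Rightarrow> real) set \<Rightarrow> ('a \<Rightarrow> real) set" where
  "span_on G B = {f. \<exists>(n::nat) c b. (\<forall>i<n. b i \<in> B) \<and> (\<forall>x\<in>G. f x = (\<Sum>i<n. c i * b i x))}"

lemma span_on_base: "b \<in> B \<Longrightarrow> b \<in> span_on G B"
  unfolding span_on_def by (intro CollectI exI[of _ 1] exI[of _ "\<lambda>_. 1"] exI[of _ "\<lambda>_. b"]) auto

lemma span_on_cong: "f \<in> span_on G B \<Longrightarrow> (\<And>x. x \<in> G \<Longrightarrow> g x = f x) \<Longrightarrow> g \<in> span_on G B"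
  unfolding span_on_def by auto

lemma span_on_zero: "(\<lambda>_. 0) \<in> span_on G B"
  unfolding span_on_def by (intro CollectI exI[of _ 0]) auto

lemma span_on_scale:
  assumes "f \<in> span_on G B"
  shows "(\<lambda>x. a * f x) \<in> span_on G B"
proof -
  obtain n :: nat and c b where "\<forall>i<n. b i \<in> B" "\<forall>x\<in>G. f x = (\<Sum>i<n. c i * b i x)"
    using assms unfolding span_on_def by blast
  then show ?thesis
    unfolding span_on_def
    by (intro CollectI exI[of _ n] exI[of _ "\<lambda>i. a * c i"] exI[of _ b]) (simp add: sum_distrib_left mult.assoc)
qed

lemma span_on_add:
  assumes "f \<in> span_on G B" "g \<in> span_on G B"
  shows "(\<lambda>x. f x + g x) \<in> span_on G B"
proof -
  obtain n :: nat and c b where f: "\<forall>i<n. b i \<in> B" "\<forall>x\<in>G. f x = (\<Sum>i<n. c i * b i x)"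
    using assms(1) unfolding span_on_def by blast
  obtain n' :: nat and c' b' where g: "\<forall>i<n'. b' i \<in> B" "\<forall>x\<in>G. g x = (\<Sum>i<n'. c' i * b' i x)"
    using assms(2) unfolding span_on_def by blast
  define c'' where "c'' i = (if i < n then c i else c' (i - n))" for i
  define b'' where "b'' i = (if i < n then b i else b' (i - n))" for i
  have "(\<Sum>i<n + n'. c'' i * b'' i x) = (\<Sum>i<n. c i * b i x) + (\<Sum>i<n'. c' i * b' i x)" for x
    by (induction n') (auto simp: c''_def b''_def)
  moreover have "\<forall>i<n + n'. b'' i \<in> B"
    using f g by (auto simp: b''_def)
  ultimately show ?thesis
    unfolding span_on_def using f g by (intro CollectI exI[of _ "n + n'"] exI[of _ c''] exI[of _ b'']) auto
qed

lemma span_on_sum: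
  "(\<And>a. a \<in> A \<Longrightarrow> f a \<in> span_on G B) \<Longrightarrow> (\<lambda>x. \<Sum>a\<in>A. f a x) \<in> span_on G B"
proof (induction A rule: infinite_finite_induct)
  case (insert a A)
  then show ?case using span_on_add[of "f a" G B] by simp
qed (simp_all add: span_on_zero)

lemma span_on_subset_span_on:
  assumes "B \<subseteq> span_on G B'"
  shows "span_on G B \<subseteq> span_on G B'"
proof
  fix f assume "f \<in> span_on G B"
  then obtain n :: nat and c b where b: "\<forall>i<n. b i \<in> B" and f: "\<forall>x\<in>G. f x = (\<Sum>i<n. c i * b i x)"
    unfolding span_on_def by blast
  have "(\<lambda>x. \<Sum>i<n. c i * b i x) \<in> span_on G B'"
    using b assms by (intro span_on_sum span_on_scale) auto
  then show "f \<in> span_on G B'" by (rule span_on_cong) (use f in auto)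
qed

definition inner_powers :: "nat \<Rightarrow> nat \<Rightarrow> (real^'n^'n \<Rightarrow> real) set" where
  "inner_powers l t = {\<lambda>P. mat_inner M P ^ s | M s. sym_mat M \<and> rank M \<le> l \<and> s \<le> t}"

definition monomials :: "nat \<Rightarrow> (real^'n^'n \<Rightarrow> real) set" where
  "monomials t = {\<lambda>P. \<Prod>j<m. P $ a j $ b j | m a b. m \<le> t}"

lemma monomial_in_monomials: "m \<le> t \<Longrightarrow> (\<lambda>P. \<Prod>j<m. P $ a j $ b j) \<in> monomials t"
  unfolding monomials_def by (intro CollectI exI[of _ m] exI[of _ a] exI[of _ b]) simp

lemma inner_power_in_inner_powers:
  "sym_mat M \<Longrightarrow> rank M \<le> l \<Longrightarrow> s \<le> t \<Longrightarrow> (\<lambda>P. mat_inner M P ^ s) \<in> inner_powers l t"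
  unfolding inner_powers_def by (intro CollectI exI[of _ M] exI[of _ s]) simp

lemma PolRank_eq_span_on: "(PolRank l t k :: (real^'n^'n \<Rightarrow> real) set) = span_on (grass k) (inner_powers l t)"
proof (intro equalityI subsetI)
  fix f :: "real^'n^'n \<Rightarrow> real" assume "f \<in> PolRank l t k"
  then obtain n c s and M :: "nat \<Rightarrow> real^'n^'n"
    where "\<forall>i<n. sym_mat (M i) \<and> rank (M i) \<le> l \<and> s i \<le> t"
      "\<forall>P\<in>grass k. f P = (\<Sum>i<n. c i * mat_inner (M i) P ^ s i)"
    unfolding PolRank_def by blast
  then show "f \<in> span_on (grass k) (inner_powers l t)"
    unfolding span_on_def inner_powers_def
    by (intro CollectI exI[of _ n] exI[of _ c] exI[of _ "\<lambda>i P. mat_inner (M i) P ^ s i"]) blast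
next
  fix f :: "real^'n^'n \<Rightarrow> real" assume "f \<in> span_on (grass k) (inner_powers l t)"
  then obtain n :: nat and c b where b: "\<forall>i<n. \<exists>M s. b i = (\<lambda>P. mat_inner M P ^ s) \<and> sym_mat M \<and> rank M \<le> l \<and> s \<le> t"
    and f: "\<forall>P\<in>grass k. f P = (\<Sum>i<n. c i * b i P)"
    unfolding span_on_def inner_powers_def by blast
  then obtain M s where pow: "\<And>i. i < n \<Longrightarrow>
      b i = (\<lambda>P. mat_inner (M i) P ^ s i) \<and> sym_mat (M i) \<and> rank (M i) \<le> l \<and> s i \<le> t"
    by metis
  have "\<forall>P\<in>grass k. f P = (\<Sum>i<n. c i * mat_inner (M i) P ^ s i)"
    using f pow by simp
  with pow show "f \<in> PolRank l t k"
    unfolding PolRank_def by (intro CollectI exI[of _ n] exI[of _ c] exI[of _ M] exI[of _ s]) simp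
qed

lemma PolDeg_eq_span_on: "(PolDeg t k :: (real^'n^'n \<Rightarrow> real) set) = span_on (grass k) (monomials t)"
proof (intro equalityI subsetI)
  fix f :: "real^'n^'n \<Rightarrow> real" assume "f \<in> PolDeg t k"
  then obtain n c m and a b :: "nat \<Rightarrow> nat \<Rightarrow> 'n"
    where "\<forall>i<n. m i \<le> t" "\<forall>P\<in>grass k. f P = (\<Sum>i<n. c i * (\<Prod>j<m i. P $ a i j $ b i j))"
    unfolding PolDeg_def by blast
  then show "f \<in> span_on (grass k) (monomials t)"
    unfolding span_on_def monomials_def
    by (intro CollectI exI[of _ n] exI[of _ c] exI[of _ "\<lambda>i P. \<Prod>j<m i. P $ a i j $ b i j"]) blast
next
  fix f :: "real^'n^'n \<Rightarrow> real" assume "f \<in> span_on (grass k) (monomials t)"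
  then obtain n :: nat and c b where b: "\<forall>i<n. \<exists>m a b'. b i = (\<lambda>P. \<Prod>j<m. P $ a j $ b' j) \<and> m \<le> t"
    and f: "\<forall>P\<in>grass k. f P = (\<Sum>i<n. c i * b i P)"
    unfolding span_on_def monomials_def by blast
  then obtain m a b' where mono: "\<And>i. i < n \<Longrightarrow> b i = (\<lambda>P. \<Prod>j<m i. P $ a i j $ b' i j) \<and> m i \<le> t"
    by metis
  have "\<forall>P\<in>grass k. f P = (\<Sum>i<n. c i * (\<Prod>j<m i. P $ a i j $ b' i j))"
    using f mono by simp
  with mono show "f \<in> PolDeg t k"
    unfolding PolDeg_def by (intro CollectI exI[of _ n] exI[of _ c] exI[of _ m] exI[of _ a] exI[of _ b']) simp
qed

lemma mat_inner_eq_sum_entries: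
  "mat_inner M P = (\<Sum>e\<in>UNIV. M $ fst e $ snd e * P $ snd e $ fst e)"
proof -
  have "mat_inner M P = (\<Sum>i\<in>UNIV. \<Sum>j\<in>UNIV. M $ i $ j * P $ j $ i)"
    unfolding mat_inner_def trace_def matrix_matrix_mult_def by simp
  then show ?thesis
    unfolding sum.cartesian_product UNIV_Times_UNIV by (simp add: case_prod_beta)
qed

lemma power_sum_eq_sum_PiE:
  fixes g :: "'e \<Rightarrow> 'a::comm_semiring_1"
  assumes "finite E"
  shows "(\<Sum>e\<in>E. g e) ^ s = (\<Sum>f\<in>{..<s} \<rightarrow>\<^sub>E E. \<Prod>j<s. g (f j))"
  using prod_sum_PiE[of "{..<s}" "\<lambda>_. E" "\<lambda>_. g"] assms by simp

lemma inner_power_in_span_monomials: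
  fixes M :: "real^'n^'n"
  assumes "s \<le> t"
  shows "(\<lambda>P. mat_inner M P ^ s) \<in> span_on G (monomials t)"
proof -
  let ?D = "{..<s} \<rightarrow>\<^sub>E (UNIV :: ('n \<times> 'n) set)"
  have expand: "mat_inner M P ^ s =
      (\<Sum>f\<in>?D. (\<Prod>j<s. M $ fst (f j) $ snd (f j)) * (\<Prod>j<s. P $ snd (f j) $ fst (f j)))" for P
    unfolding mat_inner_eq_sum_entries power_sum_eq_sum_PiE[OF finite] by (simp add: prod.distrib)
  have "(\<lambda>P. \<Sum>f\<in>?D. (\<Prod>j<s. M $ fst (f j) $ snd (f j)) * (\<Prod>j<s. P $ snd (f j) $ fst (f j)))
      \<in> span_on G (monomials t)"
    by (rule span_on_sum, rule span_on_scale, rule span_on_base, rule monomial_in_monomials) (use assms in simp)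
  then show ?thesis by (rule span_on_cong) (simp add: expand)
qed

text \<open>The \<open>m\<close>-fold finite difference of \<open>x \<mapsto> x\<^sup>p\<close> at \<open>c\<close>, with steps \<open>y 0, \<dots>, y (m - 1)\<close>.\<close>
definition iterated_difference :: "(nat \<Rightarrow> real) \<Rightarrow> nat \<Rightarrow> nat \<Rightarrow> real \<Rightarrow> real" where
  "iterated_difference y m p c = (\<Sum>S\<in>Pow {..<m}. (-1) ^ (m - card S) * (c + (\<Sum>j\<in>S. y j)) ^ p)"

lemma iterated_difference_Suc:
  "iterated_difference y (Suc m) p c = iterated_difference y m p (c + y m) - iterated_difference y m p c"
proof -
  let ?F = "\<lambda>S. (-1::real) ^ (Suc m - card S) * (c + (\<Sum>j\<in>S. y j)) ^ p"
  have inj: "inj_on (insert m) (Pow {..<m})"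
    by (rule inj_onI) (metis PowD insert_ident lessThan_iff less_irrefl subsetD)
  have "iterated_difference y (Suc m) p c = sum ?F (Pow {..<m}) + sum ?F (insert m ` Pow {..<m})"
    unfolding iterated_difference_def lessThan_Suc Pow_insert
    by (rule sum.union_disjoint) auto
  also have "sum ?F (Pow {..<m}) = - iterated_difference y m p c"
    unfolding iterated_difference_def sum_negf[symmetric]
  proof (rule sum.cong)
    fix S assume "S \<in> Pow {..<m}"
    then have "card S \<le> m" by (metis PowD card_lessThan card_mono finite_lessThan)
    then show "?F S = - ((-1) ^ (m - card S) * (c + (\<Sum>j\<in>S. y j)) ^ p)"
      by (simp add: Suc_diff_le)
  qed simp
  also have "sum ?F (insert m ` Pow {..<m}) = iterated_difference y m p (c + y m)"
    unfolding iterated_difference_def sum.reindex[OF inj]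
  proof (rule sum.cong)
    fix S assume S: "S \<in> Pow {..<m}"
    then have "finite S" "m \<notin> S" by (auto dest: finite_subset)
    then show "(?F \<circ> insert m) S = (-1) ^ (m - card S) * (c + y m + (\<Sum>j\<in>S. y j)) ^ p"
      by (simp add: add.assoc)
  qed simp
  finally show ?thesis by simp
qed

lemma iterated_difference_Suc_binomial:
  "iterated_difference y (Suc m) p c =
     (\<Sum>i<p. of_nat (p choose i) * y m ^ (p - i) * iterated_difference y m i c)"
proof -
  have binomial: "(c + y m + s) ^ p - (c + s) ^ p = (\<Sum>i<p. of_nat (p choose i) * y m ^ (p - i) * (c + s) ^ i)"
    for s
    using binomial_ring[of "c + s" "y m" p]
    by (simp add: lessThan_Suc_atMost[symmetric] algebra_simps)
  have "iterated_difference y (Suc m) p c = (\<Sum>S\<in>Pow {..<m}. (-1) ^ (m - card S) *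
      ((c + y m + (\<Sum>j\<in>S. y j)) ^ p - (c + (\<Sum>j\<in>S. y j)) ^ p))"
    unfolding iterated_difference_Suc unfolding iterated_difference_def sum_subtractf[symmetric]
    by (simp add: algebra_simps)
  also have "\<dots> = (\<Sum>S\<in>Pow {..<m}. \<Sum>i<p. (-1) ^ (m - card S) *
      (of_nat (p choose i) * y m ^ (p - i) * (c + (\<Sum>j\<in>S. y j)) ^ i))"
    by (simp add: binomial sum_distrib_left)
  also have "\<dots> = (\<Sum>i<p. of_nat (p choose i) * y m ^ (p - i) * iterated_difference y m i c)"
    unfolding iterated_difference_def by (subst sum.swap) (simp add: sum_distrib_left algebra_simps)
  finally show ?thesis .
qed

lemma iterated_difference_power:
  "p \<le> m \<Longrightarrow> iterated_difference y m p c = (if p = m then fact m * (\<Prod>j<m. y j) else 0)"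
proof (induction m arbitrary: p)
  case 0
  then show ?case by (simp add: iterated_difference_def)
next
  case (Suc m)
  have "iterated_difference y (Suc m) p c =
      (\<Sum>i<p. if i = m then of_nat (p choose m) * y m ^ (p - m) * (fact m * (\<Prod>j<m. y j)) else 0)"
    unfolding iterated_difference_Suc_binomial
    by (rule sum.cong) (use Suc in auto)
  also have "\<dots> = (if p = Suc m then fact (Suc m) * (\<Prod>j<Suc m. y j) else 0)"
    using Suc.prems by (auto simp: algebra_simps)
  finally show ?case .
qed

lemma prod_eq_polarization:
  fixes y :: "nat \<Rightarrow> real"
  shows "(\<Prod>j<m. y j) = (\<Sum>S\<in>Pow {..<m}. (-1) ^ (m - card S) / fact m * (\<Sum>j\<in>S. y j) ^ m)"
  using iterated_difference_power[of m m y 0]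
  by (simp add: iterated_difference_def sum_divide_distrib[symmetric] field_simps)

definition outer :: "real^'n \<Rightarrow> real^'n^'n" where
  "outer u = (\<chi> i j. u $ i * u $ j)"

lemma mat_inner_outer: "mat_inner (outer u) P = u \<bullet> (P *v u)"
proof -
  have "mat_inner (outer u) P = (\<Sum>i\<in>UNIV. \<Sum>j\<in>UNIV. u $ i * u $ j * P $ j $ i)"
    unfolding mat_inner_def trace_def matrix_matrix_mult_def outer_def by simp
  also have "\<dots> = (\<Sum>j\<in>UNIV. \<Sum>i\<in>UNIV. u $ j * (P $ j $ i * u $ i))"
    by (subst sum.swap) (simp add: mult_ac)
  finally show ?thesis
    unfolding inner_vec_def matrix_vector_mult_def by (simp add: sum_distrib_left)
qed

lemma mat_inner_sum_left: "mat_inner (\<Sum>j\<in>S. M j) P = (\<Sum>j\<in>S. mat_inner (M j) P)"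
  unfolding mat_inner_def trace_def matrix_matrix_mult_def
  by (simp add: sum_distrib_right sum.swap[of _ S])

lemma sym_mat_sum_outer: "sym_mat (\<Sum>j\<in>S. outer (u j))"
  unfolding sym_mat_def transpose_def outer_def by (simp add: vec_eq_iff mult.commute)

lemma rank_sum_outer_le:
  assumes "finite S"
  shows "rank (\<Sum>j\<in>S. outer (u j)) \<le> card S"
proof -
  have "(\<Sum>j\<in>S. outer (u j)) *v x = (\<Sum>j\<in>S. (u j \<bullet> x) *\<^sub>R u j)" for x
    unfolding outer_def matrix_vector_mult_def inner_vec_def
    by (simp add: vec_eq_iff sum_distrib_left sum_distrib_right sum.swap[of _ S] mult_ac)
  then have "(\<Sum>j\<in>S. outer (u j)) *v x \<in> span (u ` S)" for x
    by (simp only:) (intro span_sum span_scale span_base imageI)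
  then have "range ((*v) (\<Sum>j\<in>S. outer (u j))) \<subseteq> span (u ` S)"
    by blast
  then have "rank (\<Sum>j\<in>S. outer (u j)) \<le> card (u ` S)"
    unfolding rank_dim_range using assms by (intro dim_le_card) auto
  also have "\<dots> \<le> card S"
    using assms by (rule card_image_le)
  finally show ?thesis .
qed

lemma entry_eq_outer_polarization:
  assumes "sym_mat P"
  shows "P $ a $ b = mat_inner (outer (axis a 1 + axis b 1)) P / 4 - mat_inner (outer (axis a 1 - axis b 1)) P / 4"
proof -
  have entry: "axis i 1 \<bullet> (P *v axis j 1) = P $ i $ j" for i j
    by (simp add: matrix_vector_mult_basis column_def inner_axis')
  have "P $ b $ a = P $ a $ b"
    using assms unfolding sym_mat_def transpose_def by (metis vec_lambda_beta)
  then have "mat_inner (outer (axis a 1 + axis b 1)) P - mat_inner (outer (axis a 1 - axis b 1)) P = 4 * P $ a $ b"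
    unfolding mat_inner_outer by (simp add: algebra_simps entry)
  then show ?thesis
    by simp
qed

lemma prod_mat_inner_outer_in_span:
  assumes "m \<le> l" "m \<le> t"
  shows "(\<lambda>P. \<Prod>j<m. mat_inner (outer (v j)) P) \<in> span_on G (inner_powers l t)"
proof -
  have polarized: "(\<Prod>j<m. mat_inner (outer (v j)) P) =
      (\<Sum>S\<in>Pow {..<m}. (-1) ^ (m - card S) / fact m * mat_inner (\<Sum>j\<in>S. outer (v j)) P ^ m)" for P
    unfolding prod_eq_polarization[of _ m] mat_inner_sum_left ..
  have rank: "rank (\<Sum>j\<in>S. outer (v j)) \<le> l" if "S \<subseteq> {..<m}" for S
    using rank_sum_outer_le[of S v] card_mono[OF _ that] finite_subset[OF that] assms(1) by simp
  have "(\<lambda>P. \<Sum>S\<in>Pow {..<m}. (-1) ^ (m - card S) / fact m * mat_inner (\<Sum>j\<in>S. outer (v j)) P ^ m)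
      \<in> span_on G (inner_powers l t)"
    by (rule span_on_sum, rule span_on_scale, rule span_on_base, rule inner_power_in_inner_powers)
      (use rank assms(2) sym_mat_sum_outer in auto)
  then show ?thesis by (rule span_on_cong) (simp add: polarized)
qed

lemma monomial_in_span_inner_powers_low_degree:
  fixes a b :: "nat \<Rightarrow> 'n::finite"
  assumes "G \<subseteq> Collect sym_mat" "m \<le> l" "m \<le> t"
  shows "(\<lambda>P::real^'n^'n. \<Prod>j<m. P $ a j $ b j) \<in> span_on G (inner_powers l t)"
proof -
  define v :: "nat \<Rightarrow> bool \<Rightarrow> real^'n" where
    "v j s = (if s then axis (a j) 1 + axis (b j) 1 else axis (a j) 1 - axis (b j) 1)" for j s
  define sign :: "bool \<Rightarrow> real" where "sign s = (if s then 1 else -1)" for s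
  let ?D = "{..<m} \<rightarrow>\<^sub>E (UNIV :: bool set)"
  have expand: "(\<Prod>j<m. P $ a j $ b j) =
      (\<Sum>\<sigma>\<in>?D. (\<Prod>j<m. sign (\<sigma> j) / 4) * (\<Prod>j<m. mat_inner (outer (v j (\<sigma> j))) P))"
    if "P \<in> G" for P
  proof -
    have "(\<Prod>j<m. P $ a j $ b j) = (\<Prod>j<m. \<Sum>s\<in>UNIV. sign s / 4 * mat_inner (outer (v j s)) P)"
      using that assms(1) entry_eq_outer_polarization
      by (intro prod.cong) (auto simp: UNIV_bool sign_def v_def)
    also have "\<dots> = (\<Sum>\<sigma>\<in>?D. \<Prod>j<m. sign (\<sigma> j) / 4 * mat_inner (outer (v j (\<sigma> j))) P)"
      by (rule prod_sum_PiE) auto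
    finally show ?thesis
      by (simp only: prod.distrib)
  qed
  have "(\<lambda>P. \<Sum>\<sigma>\<in>?D. (\<Prod>j<m. sign (\<sigma> j) / 4) * (\<Prod>j<m. mat_inner (outer (v j (\<sigma> j))) P))
      \<in> span_on G (inner_powers l t)"
    by (rule span_on_sum, rule span_on_scale, rule prod_mat_inner_outer_in_span) (use assms(2,3) in auto)
  then show ?thesis by (rule span_on_cong) (simp add: expand)
qed

lemma rank_eq_trace_if_projection:
  fixes P :: "real^'n^'n"
  assumes sym: "transpose P = P" and idem: "P ** P = P"
  shows "real (rank P) = trace P"
proof -
  have "subspace (range ((*v) P))"
    by (rule linear_subspace_image[OF matrix_vector_mul_linear subspace_UNIV])
  then obtain B where B: "B \<subseteq> range ((*v) P)" "pairwise orthogonal B" "\<And>x. x \<in> B \<Longrightarrow> norm x = 1"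
    "independent B" "card B = dim (range ((*v) P))" "span B = range ((*v) P)"
    by (rule orthonormal_basis_subspace) blast
  have fin: "finite B" using B(4) by (rule independent_imp_finite)
  have fixed: "P *v w = w" if "w \<in> B" for w
    using B(1) that idem by (auto simp: matrix_vector_mul_assoc)
  have expand: "P *v x = (\<Sum>w\<in>B. (x \<bullet> w) *\<^sub>R w)" for x
  proof -
    have "P *v x = (\<Sum>w\<in>B. ((P *v x) \<bullet> w) *\<^sub>R w)"
      using orthonormal_basis_expand[OF B(2,3) _ fin] B(6) by auto
    also have "\<dots> = (\<Sum>w\<in>B. (x \<bullet> w) *\<^sub>R w)"
      using fixed sym by (intro sum.cong refl) (metis dot_lmul_matrix inner_commute vector_transpose_matrix)
    finally show ?thesis .
  qed
  have "trace P = (\<Sum>i\<in>UNIV. (P *v axis i 1) $ i)"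
    unfolding trace_def by (simp add: matrix_vector_mult_basis column_def)
  also have "\<dots> = (\<Sum>w\<in>B. \<Sum>i\<in>UNIV. w $ i * w $ i)"
    unfolding expand by (simp add: inner_axis' sum.swap[of _ B])
  also have "\<dots> = (\<Sum>w\<in>B. 1)"
    using B(3) by (intro sum.cong refl) (auto simp: norm_eq_1 inner_vec_def)
  finally show ?thesis
    using B(5) by (simp add: rank_dim_range)
qed

lemma rank_grass: "P \<in> grass k \<Longrightarrow> rank P = k"
  using rank_eq_trace_if_projection[of P] unfolding grass_def sym_mat_def by simp

definition dot_on :: "'d set \<Rightarrow> ('d \<Rightarrow> real) \<Rightarrow> ('d \<Rightarrow> real) \<Rightarrow> real" where
  "dot_on D u v = (\<Sum>e\<in>D. u e * v e)"

lemma dot_on_commute: "dot_on D u v = dot_on D v u"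
  unfolding dot_on_def by (simp add: mult.commute)

lemma dot_on_cong: "(\<And>e. e \<in> D \<Longrightarrow> v e = v' e) \<Longrightarrow> dot_on D u v = dot_on D u v'"
  unfolding dot_on_def by simp

lemma dot_on_add_left: "dot_on D (\<lambda>e. u e + u' e) v = dot_on D u v + dot_on D u' v"
  unfolding dot_on_def by (simp add: distrib_right sum.distrib)

lemma dot_on_add_right: "dot_on D u (\<lambda>e. v e + v' e) = dot_on D u v + dot_on D u v'"
  unfolding dot_on_def by (simp add: distrib_left sum.distrib)

lemma dot_on_diff_left: "dot_on D (\<lambda>e. u e - u' e) v = dot_on D u v - dot_on D u' v"
  unfolding dot_on_def by (simp add: left_diff_distrib sum_subtractf)

lemma dot_on_scale_left: "dot_on D (\<lambda>e. a * u e) v = a * dot_on D u v"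
  unfolding dot_on_def by (simp add: sum_distrib_left mult.assoc)

lemma dot_on_lincomb_right:
  "dot_on D u (\<lambda>e. \<Sum>i<n. c i * v i e) = (\<Sum>i<n. c i * dot_on D u (v i))"
  unfolding dot_on_def by (simp add: sum_distrib_left sum.swap[of _ D] mult_ac)

lemma dot_on_lincomb_left:
  "dot_on D (\<lambda>e. \<Sum>i<n. c i * v i e) u = (\<Sum>i<n. c i * dot_on D (v i) u)"
  using dot_on_lincomb_right[of D u] by (simp add: dot_on_commute)

lemma dot_on_self_eq_0:
  assumes "finite D" "dot_on D u u = 0" "e \<in> D"
  shows "u e = 0"
  using assms sum_nonneg_eq_0_iff[of D "\<lambda>e. u e * u e"] unfolding dot_on_def by simp

lemma finite_spanning_subfamily:
  fixes V :: "'x \<Rightarrow> 'd \<Rightarrow> real"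
  assumes "finite D"
  shows "\<exists>(n::nat) A. (\<forall>i<n. A i \<in> G) \<and> (\<forall>X\<in>G. \<exists>c. \<forall>e\<in>D. V X e = (\<Sum>i<n. c i * V (A i) e))"
  using assms
proof (induction D rule: finite_induct)
  case (insert d D)
  then obtain n :: nat and A where A: "\<forall>i<n. A i \<in> G" and "\<forall>X\<in>G. \<exists>c. \<forall>e\<in>D. V X e = (\<Sum>i<n. c i * V (A i) e)"
    by blast
  then obtain c where c: "\<And>X e. X \<in> G \<Longrightarrow> e \<in> D \<Longrightarrow> V X e = (\<Sum>i<n. c X i * V (A i) e)"
    by metis
  define res where "res X = V X d - (\<Sum>i<n. c X i * V (A i) d)" for X
  show ?case
  proof (cases "\<exists>Y\<in>G. res Y \<noteq> 0")
    case False
    then show ?thesis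
      using A c unfolding res_def by (intro exI[of _ n] exI[of _ A]) (auto intro!: exI[of _ "c _"])
  next
    case True
    then obtain Y where Y: "Y \<in> G" "res Y \<noteq> 0" by blast
    have "\<exists>c'. \<forall>e\<in>insert d D. V X e = (\<Sum>i<Suc n. c' i * V ((A(n := Y)) i) e)" if X: "X \<in> G" for X
    proof -
      define ratio where "ratio = res X / res Y"
      have ratio: "ratio * res Y = res X"
        using Y(2) by (simp add: ratio_def)
      have "V X e = ratio * V Y e + (\<Sum>i<n. (c X i - ratio * c Y i) * V (A i) e)" if "e \<in> insert d D" for e
      proof -
        have "(\<Sum>i<n. (c X i - ratio * c Y i) * V (A i) e) =
            (\<Sum>i<n. c X i * V (A i) e) - ratio * (\<Sum>i<n. c Y i * V (A i) e)"
          by (simp add: left_diff_distrib sum_subtractf sum_distrib_left mult.assoc)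
        then show ?thesis
          using that ratio c[OF X] c[OF Y(1)] unfolding res_def by (auto simp: algebra_simps)
      qed
      then show ?thesis
        by (intro exI[of _ "\<lambda>i. if i < n then c X i - ratio * c Y i else ratio"]) simp
    qed
    then show ?thesis
      using A Y(1) by (intro exI[of _ "Suc n"] exI[of _ "A(n := Y)"]) (simp add: less_Suc_eq)
  qed
qed (auto intro: exI[of _ "0::nat"])

lemma orthogonal_projection_coefficients:
  fixes n :: nat
  assumes "finite D"
  shows "\<exists>c. \<forall>i<n. dot_on D (\<lambda>e. w e - (\<Sum>j<n. c j * v j e)) (v i) = 0"
proof (induction n arbitrary: w)
  case (Suc n)
  obtain c where c: "\<forall>i<n. dot_on D (\<lambda>e. w e - (\<Sum>j<n. c j * v j e)) (v i) = 0"
    using Suc.IH by blast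
  obtain c' where c': "\<forall>i<n. dot_on D (\<lambda>e. v n e - (\<Sum>j<n. c' j * v j e)) (v i) = 0"
    using Suc.IH by blast
  define r where "r e = w e - (\<Sum>j<n. c j * v j e)" for e
  define s where "s e = v n e - (\<Sum>j<n. c' j * v j e)" for e
  txt \<open>If \<open>s\<close> vanishes on \<open>D\<close>, division by zero gives \<open>\<mu> = 0\<close>, which is still right.\<close>
  define \<mu> where "\<mu> = dot_on D r s / dot_on D s s"
  have perp: "dot_on D (\<lambda>e. r e - \<mu> * s e) (v i) = 0" if "i < n" for i
    using c c' that unfolding r_def s_def by (simp add: dot_on_diff_left dot_on_scale_left)
  have "dot_on D r s = \<mu> * dot_on D s s"
  proof (cases "dot_on D s s = 0")
    case True
    then have "dot_on D r s = 0"
      using dot_on_self_eq_0[OF assms True] by (simp add: dot_on_def)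
    with True show ?thesis by simp
  qed (simp add: \<mu>_def)
  then have "dot_on D (\<lambda>e. r e - \<mu> * s e) s = 0"
    by (simp add: dot_on_diff_left dot_on_scale_left)
  moreover have "v n = (\<lambda>e. s e + (\<Sum>j<n. c' j * v j e))"
    unfolding s_def by simp
  ultimately have "dot_on D (\<lambda>e. r e - \<mu> * s e) (v n) = 0"
    using perp by (simp add: dot_on_add_right dot_on_lincomb_right)
  moreover have "w e - (\<Sum>j<Suc n. (if j < n then c j - \<mu> * c' j else \<mu>) * v j e) = r e - \<mu> * s e" for e
    unfolding r_def s_def by (simp add: algebra_simps sum_subtractf sum_distrib_left)
  ultimately show ?case
    using perp by (intro exI[of _ "\<lambda>j. if j < n then c j - \<mu> * c' j else \<mu>"]) (simp add: less_Suc_eq)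
qed simp

lemma dot_on_representation:
  fixes V :: "'x \<Rightarrow> 'd \<Rightarrow> real"
  assumes "finite D"
  obtains n :: nat and A c where "\<forall>i<n. A i \<in> G"
    "\<forall>X\<in>G. dot_on D W (V X) = (\<Sum>i<n. c i * dot_on D (V (A i)) (V X))"
proof -
  obtain n :: nat and A where A: "\<forall>i<n. A i \<in> G"
    and spanning: "\<forall>X\<in>G. \<exists>c. \<forall>e\<in>D. V X e = (\<Sum>i<n. c i * V (A i) e)"
    using finite_spanning_subfamily[OF assms, of G V] by blast
  obtain c where c: "\<forall>i<n. dot_on D (\<lambda>e. W e - (\<Sum>j<n. c j * V (A j) e)) (V (A i)) = 0"
    using orthogonal_projection_coefficients[OF assms, where w = W and v = "\<lambda>j. V (A j)"] by blast
  define r where "r e = W e - (\<Sum>j<n. c j * V (A j) e)" for e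
  have "dot_on D W (V X) = (\<Sum>i<n. c i * dot_on D (V (A i)) (V X))" if "X \<in> G" for X
  proof -
    obtain cX where cX: "\<forall>e\<in>D. V X e = (\<Sum>i<n. cX i * V (A i) e)"
      using spanning \<open>X \<in> G\<close> by blast
    have "dot_on D r (V X) = dot_on D r (\<lambda>e. \<Sum>i<n. cX i * V (A i) e)"
      using cX by (intro dot_on_cong) simp
    also have "\<dots> = (\<Sum>i<n. cX i * dot_on D r (V (A i)))"
      by (rule dot_on_lincomb_right)
    also have "\<dots> = 0"
      using c unfolding r_def by simp
    finally have "dot_on D r (V X) = 0" .
    moreover have "dot_on D W (V X) = dot_on D (\<lambda>e. r e + (\<Sum>j<n. c j * V (A j) e)) (V X)"
      unfolding r_def by simp
    ultimately show ?thesis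
      by (simp only: dot_on_add_left dot_on_lincomb_left add_0)
  qed
  with A that show ?thesis by blast
qed

lemma sum_diagonal_eq_trace: "(\<Sum>e\<in>UNIV. if fst e = snd e then X $ fst e $ snd e else 0) = trace X"
proof -
  have "trace X = (\<Sum>i\<in>UNIV. \<Sum>j\<in>UNIV. if i = j then X $ i $ j else 0)"
    unfolding trace_def by simp
  then show ?thesis
    unfolding sum.cartesian_product UNIV_Times_UNIV by (simp add: case_prod_beta)
qed

lemma monomial_in_span_inner_powers_grass:
  fixes a b :: "nat \<Rightarrow> 'n::finite"
  assumes "1 \<le> k" "k \<le> l" "m \<le> t"
  shows "(\<lambda>P::real^'n^'n. \<Prod>j<m. P $ a j $ b j) \<in> span_on (grass k) (inner_powers l t)"
proof -
  let ?D = "{..<t} \<rightarrow>\<^sub>E (UNIV :: ('n \<times> 'n) set)"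
  define V :: "real^'n^'n \<Rightarrow> (nat \<Rightarrow> 'n \<times> 'n) \<Rightarrow> real"
    where "V X f = (\<Prod>j<t. X $ fst (f j) $ snd (f j))" for X f
  txt \<open>The factors \<open>j \<ge> m\<close> are \<open>trace X / k = 1\<close>; they make the monomial homogeneous of degree \<open>t\<close>.\<close>
  define w :: "nat \<Rightarrow> 'n \<times> 'n \<Rightarrow> real"
    where "w j e = (if j < m then of_bool (e = (a j, b j)) else of_bool (fst e = snd e) / real k)" for j e
  have factor: "(\<Sum>e\<in>UNIV. w j e * X $ fst e $ snd e) = (if j < m then X $ a j $ b j else 1)"
    if "X \<in> grass k" for X j
  proof (cases "j < m")
    case False
    have "(\<Sum>e\<in>UNIV. w j e * X $ fst e $ snd e) = (\<Sum>e\<in>UNIV. if fst e = snd e then X $ fst e $ snd e else 0) / real k"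
      unfolding sum_divide_distrib by (intro sum.cong) (auto simp: w_def False)
    also have "\<dots> = 1"
      using that assms(1) by (simp add: sum_diagonal_eq_trace grass_def)
    finally show ?thesis using False by simp
  qed (simp add: w_def if_distrib[of "\<lambda>x. x * _"] cong: if_cong)
  have homogenized: "(\<Prod>j<m. X $ a j $ b j) = dot_on ?D (\<lambda>f. \<Prod>j<t. w j (f j)) (V X)"
    if "X \<in> grass k" for X
  proof -
    have "(\<Prod>j<m. X $ a j $ b j) = (\<Prod>j<t. if j < m then X $ a j $ b j else 1)"
    proof -
      have "{..<t} \<inter> {j. j < m} = {..<m}"
        using assms(3) by auto
      then show ?thesis by (simp add: prod.If_cases)
    qed
    also have "\<dots> = (\<Prod>j<t. \<Sum>e\<in>UNIV. w j e * X $ fst e $ snd e)"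
      using factor[OF that] by simp
    also have "\<dots> = dot_on ?D (\<lambda>f. \<Prod>j<t. w j (f j)) (V X)"
      unfolding dot_on_def V_def prod.distrib[symmetric] by (rule prod_sum_PiE) auto
    finally show ?thesis .
  qed
  have kernel: "dot_on ?D (V A) (V X) = mat_inner A X ^ t" if "sym_mat X" for A X :: "real^'n^'n"
  proof -
    have "mat_inner A X ^ t = (\<Sum>e\<in>UNIV. A $ fst e $ snd e * X $ fst e $ snd e) ^ t"
      using that unfolding mat_inner_eq_sum_entries sym_mat_def transpose_def by (simp add: vec_eq_iff)
    also have "\<dots> = (\<Sum>f\<in>?D. \<Prod>j<t. A $ fst (f j) $ snd (f j) * X $ fst (f j) $ snd (f j))"
      by (rule power_sum_eq_sum_PiE) simp
    also have "\<dots> = dot_on ?D (V A) (V X)"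
      unfolding dot_on_def V_def by (simp only: prod.distrib)
    finally show ?thesis by (rule sym)
  qed
  obtain n :: nat and A c where A: "\<forall>i<n. A i \<in> grass k"
    and represent: "\<forall>X\<in>grass k. dot_on ?D (\<lambda>f. \<Prod>j<t. w j (f j)) (V X) =
      (\<Sum>i<n. c i * dot_on ?D (V (A i)) (V X))"
    by (rule dot_on_representation[where D = ?D and W = "\<lambda>f. \<Prod>j<t. w j (f j)" and G = "grass k" and V = V])
      (auto intro: finite_PiE)
  have "(\<lambda>X. \<Sum>i<n. c i * mat_inner (A i) X ^ t) \<in> span_on (grass k) (inner_powers l t)"
    by (rule span_on_sum, rule span_on_scale, rule span_on_base, rule inner_power_in_inner_powers)
      (use A assms(2) rank_grass in \<open>auto simp: grass_def\<close>)
  then show ?thesis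
  proof (rule span_on_cong)
    fix X :: "real^'n^'n" assume X: "X \<in> grass k"
    then have "sym_mat X" by (simp add: grass_def)
    with X show "(\<Prod>j<m. X $ a j $ b j) = (\<Sum>i<n. c i * mat_inner (A i) X ^ t)"
      using homogenized represent kernel by simp
  qed
qed

lemma inner_powers_subset_span_monomials: "inner_powers l t \<subseteq> span_on G (monomials t)"
  using inner_power_in_span_monomials by (auto simp: inner_powers_def)

lemma monomials_subset_span_inner_powers:
  assumes "1 \<le> k" "min k t \<le> l"
  shows "monomials t \<subseteq> span_on (grass k) (inner_powers l t :: (real^'n^'n \<Rightarrow> real) set)"
proof
  fix f :: "real^'n^'n \<Rightarrow> real" assume "f \<in> monomials t"
  then obtain m a b where f: "f = (\<lambda>P. \<Prod>j<m. P $ a j $ b j)" and "m \<le> t"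
    unfolding monomials_def by blast
  show "f \<in> span_on (grass k) (inner_powers l t)"
  proof (cases "t \<le> l")
    case True
    then show ?thesis
      unfolding f using \<open>m \<le> t\<close> by (intro monomial_in_span_inner_powers_low_degree) (auto simp: grass_def)
  next
    case False
    then show ?thesis
      unfolding f using \<open>m \<le> t\<close> assms by (intro monomial_in_span_inner_powers_grass) auto
  qed
qed

theorem proposition5p1:
  fixes k l t :: nat
  assumes "1 \<le> k" and "k < CARD('n)" and "l < CARD('n)"
    and "l \<ge> min k t"
  shows "(PolRank l t k :: (real^'n^'n \<Rightarrow> real) set) = PolDeg t k"
  unfolding PolRank_eq_span_on PolDeg_eq_span_on
  using inner_powers_subset_span_monomials monomials_subset_span_inner_powers[OF assms(1,4)]
  by (intro equalityI span_on_subset_span_on)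

end
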